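(* Let $L$ be a code loop with basis $\mathcal{B}=\{a_1,\dots,a_n\}$. If $\Psi\in R_\mathcal{B}$, then $\hat\Psi$ is a half-automorphism of $L$ belonging to $H_\mathcal{B}(L)$. Conversely, for every $\varphi\in H_\mathcal{B}(L)$ there exists $\Psi\in R_\mathcal{B}$ with $\varphi=\hat\Psi$.
   Context: A code loop is a finite Moufang loop (loop satisfying $(x\cdot zx)y=x(z\cdot xy)$) with a unique nontrivial square, denoted $-1$; squares, commutators $[x,y]$ (defined by $xy=(yx)[x,y]$) and associators lie in $\{1,-1\}\subseteq Z(L)$, and $-x$ denotes $(-1)x$. A half-automorphism of $L$ is a bijection $f:L\to L$ with $f(xy)\in\{f(x)f(y),f(y)f(x)\}$ for all $x,y\in L$. Let $I_n=\{1,\dots,n\}$ and $P_n$ the set of subsets of $I_n$. Put $a_\emptyset=1$ and for $\sigma=\{i_1<\dots<i_k\}$ put $a_\sigma=(\cdots((a_{i_1}a_{i_2})a_{i_3})\cdots)a_{i_k}$; then every element of $L$ is $\pm a_\sigma$ for some $\sigma\in P_n$, and $a_\sigma a_\mu=\pm a_{\sigma\Delta\mu}$ ($\Delta$ = symmetric difference). Write $\{\sigma,\mu\}=[a_\sigma,a_\mu]$. $H_\mathcal{B}(L)$ is the set of half-automorphisms $\varphi$ of $L$ with $\varphi(a_i)=a_i$ for all $i$. $R_\mathcal{B}$ is the set of maps $\Psi:P_n\to\{1,-1\}$ with $\Psi(\emptyset)=1$, $\Psi(\{j\})=1$ for all $j\in I_n$, and $\Psi(\sigma\Delta\mu)=\Psi(\sigma)\Psi(\mu)$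 whenever $\{\sigma,\mu\}=1$. For $\Psi\in R_\mathcal{B}$, $\hat\Psi:L\to L$ is defined by $\hat\Psi(a_\sigma)=\Psi(\sigma)a_\sigma$ and $\hat\Psi(-a_\sigma)=-\Psi(\sigma)a_\sigma$. *)

theory Defs
  imports Main
begin

definition is_loop :: "'a set \<Rightarrow> ('a \<Rightarrow> 'a \<Rightarrow> 'a) \<Rightarrow> 'a \<Rightarrow> bool" where
  "is_loop L mult e \<longleftrightarrow>
     e \<in> L \<and> (\<forall>x\<in>L. \<forall>y\<in>L. mult x y \<in> L) \<and>
     (\<forall>x\<in>L. mult e x = x \<and> mult x e = x) \<and>
     (\<forall>x\<in>L. \<forall>y\<in>L. \<exists>!z. z \<in> L \<and> mult x z = y) \<and>
     (\<forall>x\<in>L. \<forall>y\<in>L. \<exists>!z. z \<in> L \<and> mult z x = y)"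

definition moufang :: "'a set \<Rightarrow> ('a \<Rightarrow> 'a \<Rightarrow> 'a) \<Rightarrow> bool" where
  "moufang L mult \<longleftrightarrow>
     (\<forall>x\<in>L. \<forall>y\<in>L. \<forall>z\<in>L. mult (mult x (mult z x)) y = mult x (mult z (mult x y)))"

definition minus1 :: "'a set \<Rightarrow> ('a \<Rightarrow> 'a \<Rightarrow> 'a) \<Rightarrow> 'a \<Rightarrow> 'a" where
  "minus1 L mult e = (THE s. s \<noteq> e \<and> (\<exists>x\<in>L. mult x x = s))"

text \<open>Code loop: finite Moufang loop with a unique nontrivial square -1; moreover (as recorded
  in the paper's standing facts) squares, commutators and associators lie in the central
  subgroup {1,-1}.\<close>
definition code_loop :: "'a set \<Rightarrow> ('a \<Rightarrow> 'a \<Rightarrow> 'a) \<Rightarrow> 'a \<Rightarrow> bool" where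
  "code_loop L mult e \<longleftrightarrow>
     finite L \<and> is_loop L mult e \<and> moufang L mult \<and>
     (\<exists>!s. s \<noteq> e \<and> (\<exists>x\<in>L. mult x x = s)) \<and>
     (let m = minus1 L mult e in
        (\<forall>x\<in>L. mult x x = e \<or> mult x x = m) \<and>
        (\<forall>x\<in>L. \<forall>y\<in>L. mult m x = mult x m \<and>
                 mult (mult m x) y = mult m (mult x y) \<and>
                 mult (mult x m) y = mult x (mult m y) \<and>
                 mult (mult x y) m = mult x (mult y m)) \<and>
        (\<forall>x\<in>L. \<forall>y\<in>L. mult x y = mult (mult y x) e \<or> mult x y = mult (mult y x) m) \<and>
        (\<forall>x\<in>L. \<forall>y\<in>L. \<forall>z\<in>L. mult (mult x y) z = mult (mult x (mult y z)) e \<or>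
                                mult (mult x y) z = mult (mult x (mult y z)) m))"

definition lneg :: "'a set \<Rightarrow> ('a \<Rightarrow> 'a \<Rightarrow> 'a) \<Rightarrow> 'a \<Rightarrow> 'a \<Rightarrow> 'a" where
  "lneg L mult e x = mult (minus1 L mult e) x"

definition a_sub :: "('a \<Rightarrow> 'a \<Rightarrow> 'a) \<Rightarrow> 'a \<Rightarrow> (nat \<Rightarrow> 'a) \<Rightarrow> nat set \<Rightarrow> 'a" where
  "a_sub mult e a \<sigma> = foldl (\<lambda>acc i. mult acc (a i)) e (sorted_list_of_set \<sigma>)"

text \<open>Basis a_1..a_n: the a_i lie in L and every element of L is uniquely of the form
  a_sigma or -a_sigma with sigma a subset of {1..n}.\<close>
definition code_basis :: "'a set \<Rightarrow> ('a \<Rightarrow> 'a \<Rightarrow> 'a) \<Rightarrow> 'a \<Rightarrow> (nat \<Rightarrow> 'a) \<Rightarrow> nat \<Rightarrow> bool" where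
  "code_basis L mult e a n \<longleftrightarrow>
     (\<forall>i\<in>{1..n}. a i \<in> L) \<and>
     bij_betw (\<lambda>(b::bool, \<sigma>). if b then a_sub mult e a \<sigma> else lneg L mult e (a_sub mult e a \<sigma>))
        (UNIV \<times> Pow {1..n}) L"

definition half_automorphism :: "'a set \<Rightarrow> ('a \<Rightarrow> 'a \<Rightarrow> 'a) \<Rightarrow> ('a \<Rightarrow> 'a) \<Rightarrow> bool" where
  "half_automorphism L mult f \<longleftrightarrow>
     bij_betw f L L \<and>
     (\<forall>x\<in>L. \<forall>y\<in>L. f (mult x y) = mult (f x) (f y) \<or> f (mult x y) = mult (f y) (f x))"

definition H_B :: "'a set \<Rightarrow> ('a \<Rightarrow> 'a \<Rightarrow> 'a) \<Rightarrow> (nat \<Rightarrow> 'a) \<Rightarrow> nat \<Rightarrow> ('a \<Rightarrow> 'a) set" where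
  "H_B L mult a n = {f. half_automorphism L mult f \<and> (\<forall>i\<in>{1..n}. f (a i) = a i)}"

definition symdiff :: "nat set \<Rightarrow> nat set \<Rightarrow> nat set" where
  "symdiff \<sigma> \<mu> = (\<sigma> - \<mu>) \<union> (\<mu> - \<sigma>)"

text \<open>R_B: maps Psi : P_n \<rightarrow> {1,-1} (values outside P_n are irrelevant) with Psi({})=1,
  Psi({j})=1 and Psi(sigma Delta mu) = Psi(sigma) Psi(mu) whenever [a_sigma,a_mu]=1.\<close>
definition R_B :: "'a set \<Rightarrow> ('a \<Rightarrow> 'a \<Rightarrow> 'a) \<Rightarrow> 'a \<Rightarrow> (nat \<Rightarrow> 'a) \<Rightarrow> nat \<Rightarrow> (nat set \<Rightarrow> int) set" where
  "R_B L mult e a n = {\<Psi>.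
     (\<forall>\<sigma>\<in>Pow {1..n}. \<Psi> \<sigma> \<in> {1, -1}) \<and> \<Psi> {} = 1 \<and> (\<forall>j\<in>{1..n}. \<Psi> {j} = 1) \<and>
     (\<forall>\<sigma>\<in>Pow {1..n}. \<forall>\<mu>\<in>Pow {1..n}.
        mult (a_sub mult e a \<sigma>) (a_sub mult e a \<mu>) = mult (a_sub mult e a \<mu>) (a_sub mult e a \<sigma>)
        \<longrightarrow> \<Psi> (symdiff \<sigma> \<mu>) = \<Psi> \<sigma> * \<Psi> \<mu>)}"

definition sgn_mult :: "'a set \<Rightarrow> ('a \<Rightarrow> 'a \<Rightarrow> 'a) \<Rightarrow> 'a \<Rightarrow> int \<Rightarrow> 'a \<Rightarrow> 'a" where
  "sgn_mult L mult e k x = (if k = 1 then x else lneg L mult e x)"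

definition Psi_hat :: "'a set \<Rightarrow> ('a \<Rightarrow> 'a \<Rightarrow> 'a) \<Rightarrow> 'a \<Rightarrow> (nat \<Rightarrow> 'a) \<Rightarrow> nat \<Rightarrow> (nat set \<Rightarrow> int) \<Rightarrow> 'a \<Rightarrow> 'a" where
  "Psi_hat L mult e a n \<Psi> x =
     (let \<sigma> = (THE \<sigma>. \<sigma> \<subseteq> {1..n} \<and> (x = a_sub mult e a \<sigma> \<or> x = lneg L mult e (a_sub mult e a \<sigma>)))
      in if x = a_sub mult e a \<sigma> then sgn_mult L mult e (\<Psi> \<sigma>) (a_sub mult e a \<sigma>)
         else lneg L mult e (sgn_mult L mult e (\<Psi> \<sigma>) (a_sub mult e a \<sigma>)))"

end

theory Submission
  imports Defs
begin

(* Every x in L is +-a_\<sigma> for a unique \<sigma> =: supp x, and since the generators commute and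
   associate up to the central sign -1, supp (x y) = supp x \<Delta> supp y.  Both Psi_hat \<Psi> and
   every \<phi> in H_B are sign patterns x \<mapsto> s(supp x) x: the former by definition, the latter
   because a half-automorphism fixes -1 (the only nontrivial square), commutes with the sign and,
   fixing the a_i, preserves every a_\<sigma> up to sign.  A sign pattern sends x y to
   s(\<sigma> \<Delta> \<mu>) x y, whereas the two admissible images are s(\<sigma>) s(\<mu>) x y and s(\<sigma>) s(\<mu>) y x.
   For commuting x, y this is exactly s(\<sigma> \<Delta> \<mu>) = s(\<sigma>) s(\<mu>); otherwise y x = -x y and one
   of the two always matches. *)

lemma symdiff_subset: "\<sigma> \<subseteq> S \<Longrightarrow> \<mu> \<subseteq> S \<Longrightarrow> symdiff \<sigma> \<mu> \<subseteq> S"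
  unfolding symdiff_def by auto

lemma sign_eq_mult_iff:
  fixes j k l :: int
  assumes "j \<in> {1, -1}" "k \<in> {1, -1}" "l \<in> {1, -1}"
  shows "j = k * l \<longleftrightarrow> (j = 1) = ((k = 1) = (l = 1))"
  using assms by auto

locale code_loop_struct =
  fixes L :: "'a set" and mult :: "'a \<Rightarrow> 'a \<Rightarrow> 'a" and e :: 'a
  assumes code_loop: "code_loop L mult e"
begin

abbreviation minus_one :: 'a where "minus_one \<equiv> minus1 L mult e"

lemma is_loop: "is_loop L mult e"
  using code_loop unfolding code_loop_def by (elim conjE) assumption

lemma unit_in [simp]: "e \<in> L"
  using is_loop unfolding is_loop_def by auto

lemma mult_closed [simp]: "x \<in> L \<Longrightarrow> y \<in> L \<Longrightarrow> mult x y \<in> L"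
  using is_loop unfolding is_loop_def by auto

lemma mult_unit [simp]: "x \<in> L \<Longrightarrow> mult e x = x" "x \<in> L \<Longrightarrow> mult x e = x"
  using is_loop unfolding is_loop_def by auto

lemma left_cancel:
  assumes "x \<in> L" "y \<in> L" "z \<in> L" "mult x y = mult x z"
  shows "y = z"
proof -
  have "\<exists>!w. w \<in> L \<and> mult x w = mult x y"
    using is_loop assms unfolding is_loop_def by auto
  with assms show ?thesis by auto
qed

lemma right_cancel:
  assumes "x \<in> L" "y \<in> L" "z \<in> L" "mult y x = mult z x"
  shows "y = z"
proof -
  have "\<exists>!w. w \<in> L \<and> mult w x = mult y x"
    using is_loop assms unfolding is_loop_def by auto
  with assms show ?thesis by auto
qed

lemma minus_one_nontrivial_square: "minus_one \<noteq> e \<and> (\<exists>x\<in>L. mult x x = minus_one)"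
proof -
  have "\<exists>!s. s \<noteq> e \<and> (\<exists>x\<in>L. mult x x = s)"
    using code_loop unfolding code_loop_def by (elim conjE) assumption
  from theI'[OF this] show ?thesis unfolding minus1_def .
qed

lemma minus_one_in [simp]: "minus_one \<in> L"
proof -
  obtain x where "x \<in> L" "mult x x = minus_one" using minus_one_nontrivial_square by blast
  then show ?thesis using mult_closed[of x x] by simp
qed

lemma minus_one_neq_unit: "minus_one \<noteq> e"
  using minus_one_nontrivial_square by blast

lemma code_loop_sign_laws:
  "(\<forall>x\<in>L. mult x x = e \<or> mult x x = minus_one) \<and>
   (\<forall>x\<in>L. \<forall>y\<in>L. mult minus_one x = mult x minus_one \<and>
      mult (mult minus_one x) y = mult minus_one (mult x y) \<and>
      mult (mult x minus_one) y = mult x (mult minus_one y)) \<and>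
   (\<forall>x\<in>L. \<forall>y\<in>L. mult x y = mult (mult y x) e \<or> mult x y = mult (mult y x) minus_one) \<and>
   (\<forall>x\<in>L. \<forall>y\<in>L. \<forall>z\<in>L. mult (mult x y) z = mult (mult x (mult y z)) e \<or>
      mult (mult x y) z = mult (mult x (mult y z)) minus_one)"
  using code_loop unfolding code_loop_def Let_def by blast

lemma square_cases: "x \<in> L \<Longrightarrow> mult x x = e \<or> mult x x = minus_one"
  using code_loop_sign_laws by blast

lemma minus_one_central:
  assumes "x \<in> L" "y \<in> L"
  shows "mult minus_one x = mult x minus_one"
    and "mult (mult minus_one x) y = mult minus_one (mult x y)"
    and "mult (mult x minus_one) y = mult x (mult minus_one y)"
  using code_loop_sign_laws assms by blast+

lemma commutator_cases:
  assumes "x \<in> L" "y \<in> L"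
  shows "mult x y = mult y x \<or> mult x y = mult minus_one (mult y x)"
proof -
  have "mult x y = mult (mult y x) e \<or> mult x y = mult (mult y x) minus_one"
    using code_loop_sign_laws assms by blast
  then show ?thesis using assms minus_one_central(1)[of "mult y x" e] by simp
qed

lemma associator_cases:
  assumes "x \<in> L" "y \<in> L" "z \<in> L"
  shows "mult (mult x y) z = mult x (mult y z) \<or> mult (mult x y) z = mult minus_one (mult x (mult y z))"
proof -
  have "mult (mult x y) z = mult (mult x (mult y z)) e \<or>
      mult (mult x y) z = mult (mult x (mult y z)) minus_one"
    using code_loop_sign_laws assms by blast
  then show ?thesis using assms minus_one_central(1)[of "mult x (mult y z)" e] by simp
qed

lemma minus_one_square: "mult minus_one minus_one = e"
proof -
  have "mult minus_one minus_one \<noteq> mult e minus_one"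
    using right_cancel[of minus_one minus_one e] minus_one_neq_unit by auto
  then show ?thesis using square_cases[of minus_one] by auto
qed

text \<open>Signs are encoded as booleans (\<open>True\<close> for \<open>1\<close>), so that composing signs is
  equality of booleans and needs no side condition \<open>k \<in> {1, -1}\<close>.\<close>
definition signed :: "bool \<Rightarrow> 'a \<Rightarrow> 'a" where
  "signed b x = (if b then x else mult minus_one x)"

lemma signed_in [simp]: "x \<in> L \<Longrightarrow> signed b x \<in> L"
  unfolding signed_def by simp

lemma signed_True [simp]: "signed True x = x"
  unfolding signed_def by simp

lemma signed_signed [simp]: "x \<in> L \<Longrightarrow> signed b (signed c x) = signed (b = c) x"
  using minus_one_central(2)[of minus_one x] minus_one_square
  unfolding signed_def by auto

lemma signed_commute: "x \<in> L \<Longrightarrow> signed b (signed c x) = signed c (signed b x)"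
  by (simp add: eq_commute)

lemma mult_signed_left: "x \<in> L \<Longrightarrow> y \<in> L \<Longrightarrow> mult (signed b x) y = signed b (mult x y)"
  unfolding signed_def using minus_one_central(2) by simp

lemma mult_signed_right: "x \<in> L \<Longrightarrow> y \<in> L \<Longrightarrow> mult x (signed b y) = signed b (mult x y)"
  unfolding signed_def using minus_one_central by simp

lemma mult_signed_signed:
  "x \<in> L \<Longrightarrow> y \<in> L \<Longrightarrow> mult (signed b x) (signed c y) = signed (b = c) (mult x y)"
  by (cases b; cases c) (simp_all add: mult_signed_left mult_signed_right)

lemma signed_False_neq: "x \<in> L \<Longrightarrow> signed False x \<noteq> x"
  unfolding signed_def using right_cancel[of x minus_one e] minus_one_neq_unit by auto

lemma signed_eq_signed_iff: "x \<in> L \<Longrightarrow> signed b x = signed c x \<longleftrightarrow> b = c"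
  using signed_False_neq[of x] signed_False_neq[of "signed False x"]
  by (cases b; cases c) auto

lemma signed_inject: "x \<in> L \<Longrightarrow> y \<in> L \<Longrightarrow> signed b x = signed b y \<longleftrightarrow> x = y"
  unfolding signed_def using left_cancel[of minus_one x y] by auto

lemma lneg_eq_signed: "lneg L mult e x = signed False x"
  unfolding lneg_def signed_def by simp

lemma sgn_mult_eq_signed: "sgn_mult L mult e k x = signed (k = 1) x"
  unfolding sgn_mult_def lneg_eq_signed by simp

lemma commute_or_anticommute:
  "x \<in> L \<Longrightarrow> y \<in> L \<Longrightarrow> mult y x = mult x y \<or> mult y x = signed False (mult x y)"
  using commutator_cases[of y x] unfolding signed_def by auto

lemma signed_commute_iff:
  assumes "x \<in> L" "y \<in> L"
  shows "mult (signed b x) (signed c y) = mult (signed c y) (signed b x) \<longleftrightarrow> mult x y = mult y x"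
  using assms by (simp add: mult_signed_signed signed_inject eq_commute[of b c])

text \<open>For anticommuting \<open>x, y\<close> both signs are available, so only commuting pairs constrain
  \<open>r\<close>.\<close>
lemma signed_half_hom_iff:
  assumes "x \<in> L" "y \<in> L"
  shows "(signed r (mult x y) = mult (signed p x) (signed q y) \<or>
          signed r (mult x y) = mult (signed q y) (signed p x)) \<longleftrightarrow>
         (mult x y = mult y x \<longrightarrow> r = (p = q))"
proof (cases "mult y x = mult x y")
  case True
  then show ?thesis
    using assms by (auto simp: mult_signed_signed signed_eq_signed_iff eq_commute[of q p])
next
  case False
  then have "mult y x = signed False (mult x y)"
    using commute_or_anticommute assms by blast
  then show ?thesis
    using assms False by (auto simp: mult_signed_signed signed_eq_signed_iff eq_commute[of q p])
qed

definition sign_equiv :: "'a \<Rightarrow> 'a \<Rightarrow> bool" (infix "\<approx>" 50) where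
  "x \<approx> y \<longleftrightarrow> x \<in> L \<and> y \<in> L \<and> (\<exists>b. x = signed b y)"

lemma sign_equiv_refl: "x \<in> L \<Longrightarrow> x \<approx> x"
  unfolding sign_equiv_def by (auto intro!: exI[of _ True])

lemma sign_equiv_signed: "x \<in> L \<Longrightarrow> signed b x \<approx> x"
  unfolding sign_equiv_def by auto

lemma sign_equiv_sym: "x \<approx> y \<Longrightarrow> y \<approx> x"
proof -
  assume "x \<approx> y"
  then obtain b where "x \<in> L" "y \<in> L" "x = signed b y"
    unfolding sign_equiv_def by blast
  then have "y = signed b x" by simp
  with \<open>x \<in> L\<close> \<open>y \<in> L\<close> show ?thesis
    unfolding sign_equiv_def by blast
qed

lemma sign_equiv_trans [trans]: "x \<approx> y \<Longrightarrow> y \<approx> z \<Longrightarrow> x \<approx> z"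
proof -
  assume "x \<approx> y" "y \<approx> z"
  then obtain b c where "x \<in> L" "z \<in> L" "x = signed b y" "y = signed c z"
    unfolding sign_equiv_def by blast
  then have "x = signed (b = c) z" by simp
  with \<open>x \<in> L\<close> \<open>z \<in> L\<close> show ?thesis
    unfolding sign_equiv_def by blast
qed

lemma sign_equiv_eq_signed: "x \<approx> y \<Longrightarrow> x = signed (x = y) y"
proof -
  assume "x \<approx> y"
  then obtain b where "y \<in> L" "x = signed b y"
    unfolding sign_equiv_def by blast
  then show ?thesis by (cases b) (auto dest: signed_False_neq)
qed

lemma sign_equiv_mult:
  assumes "x \<approx> x'" "y \<approx> y'"
  shows "mult x y \<approx> mult x' y'"
proof -
  obtain b c where "x' \<in> L" "y' \<in> L" "x = signed b x'" "y = signed c y'"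
    using assms unfolding sign_equiv_def by blast
  then show ?thesis
    using sign_equiv_signed by (simp add: mult_signed_signed)
qed

lemma sign_equiv_mult_left: "x \<approx> x' \<Longrightarrow> y \<in> L \<Longrightarrow> mult x y \<approx> mult x' y"
  using sign_equiv_mult sign_equiv_refl by blast

lemma sign_equiv_mult_right: "y \<approx> y' \<Longrightarrow> x \<in> L \<Longrightarrow> mult x y \<approx> mult x y'"
  using sign_equiv_mult sign_equiv_refl by blast

lemma sign_equiv_commute: "x \<in> L \<Longrightarrow> y \<in> L \<Longrightarrow> mult x y \<approx> mult y x"
  using commutator_cases[of x y] unfolding sign_equiv_def signed_def by auto

lemma sign_equiv_assoc: "x \<in> L \<Longrightarrow> y \<in> L \<Longrightarrow> z \<in> L \<Longrightarrow> mult (mult x y) z \<approx> mult x (mult y z)"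
  using associator_cases[of x y z] unfolding sign_equiv_def signed_def by auto

lemma sign_equiv_square: "x \<in> L \<Longrightarrow> mult x x \<approx> e"
  using square_cases[of x] unfolding sign_equiv_def signed_def by auto

lemma half_automorphismD:
  assumes "half_automorphism L mult \<phi>"
  shows "inj_on \<phi> L" and "x \<in> L \<Longrightarrow> \<phi> x \<in> L"
    and "x \<in> L \<Longrightarrow> y \<in> L \<Longrightarrow> \<phi> (mult x y) = mult (\<phi> x) (\<phi> y) \<or> \<phi> (mult x y) = mult (\<phi> y) (\<phi> x)"
  using assms unfolding half_automorphism_def bij_betw_def by auto

lemma half_automorphism_unit:
  assumes "half_automorphism L mult \<phi>"
  shows "\<phi> e = e"
proof -
  have "\<phi> e \<in> L"
    using half_automorphismD(2)[OF assms] by simp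
  moreover have "\<phi> (mult e e) = mult (\<phi> e) (\<phi> e)"
    using half_automorphismD(3)[OF assms, of e e] by simp
  ultimately have "mult e (\<phi> e) = mult (\<phi> e) (\<phi> e)"
    by simp
  with \<open>\<phi> e \<in> L\<close> show ?thesis
    using right_cancel[of "\<phi> e" e "\<phi> e"] by simp
qed

lemma half_automorphism_minus_one:
  assumes "half_automorphism L mult \<phi>"
  shows "\<phi> minus_one = minus_one"
proof -
  obtain x where x: "x \<in> L" "mult x x = minus_one"
    using minus_one_nontrivial_square by blast
  then have "\<phi> minus_one = mult (\<phi> x) (\<phi> x)"
    using half_automorphismD(3)[OF assms x(1) x(1)] by simp
  then have "\<phi> minus_one = e \<or> \<phi> minus_one = minus_one"
    using square_cases[of "\<phi> x"] half_automorphismD(2)[OF assms x(1)] by simp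
  moreover have "\<phi> minus_one \<noteq> \<phi> e"
    using half_automorphismD(1)[OF assms] minus_one_neq_unit unfolding inj_on_def by auto
  ultimately show ?thesis
    using half_automorphism_unit[OF assms] by auto
qed

lemma half_automorphism_signed:
  assumes "half_automorphism L mult \<phi>" "x \<in> L"
  shows "\<phi> (signed b x) = signed b (\<phi> x)"
proof -
  have "\<phi> (mult minus_one x) = mult (\<phi> minus_one) (\<phi> x) \<or>
      \<phi> (mult minus_one x) = mult (\<phi> x) (\<phi> minus_one)"
    using half_automorphismD(3)[OF assms(1) minus_one_in assms(2)] .
  moreover have "mult minus_one (\<phi> x) = mult (\<phi> x) minus_one"
    using minus_one_central(1) half_automorphismD(2)[OF assms] by blast
  ultimately have "\<phi> (mult minus_one x) = mult minus_one (\<phi> x)"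
    using half_automorphism_minus_one[OF assms(1)] by auto
  then show ?thesis unfolding signed_def by simp
qed

lemma half_automorphism_sign_equiv:
  assumes "half_automorphism L mult \<phi>" "x \<approx> y"
  shows "\<phi> x \<approx> \<phi> y"
proof -
  obtain b where "y \<in> L" "x = signed b y"
    using assms(2) unfolding sign_equiv_def by blast
  then show ?thesis
    using half_automorphism_signed[OF assms(1)] half_automorphismD(2)[OF assms(1)]
    by (simp add: sign_equiv_signed)
qed

lemma half_automorphism_mult:
  assumes "half_automorphism L mult \<phi>" "x \<in> L" "y \<in> L"
  shows "\<phi> (mult x y) \<approx> mult (\<phi> x) (\<phi> y)"
proof -
  have "\<phi> x \<in> L" "\<phi> y \<in> L"
    using half_automorphismD(2)[OF assms(1)] assms(2,3) by auto
  then show ?thesis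
    using half_automorphismD(3)[OF assms] sign_equiv_refl[of "mult (\<phi> x) (\<phi> y)"]
      sign_equiv_commute[of "\<phi> y" "\<phi> x"] by auto
qed

end

locale code_loop_with_basis = code_loop_struct +
  fixes a :: "nat \<Rightarrow> 'a" and n :: nat
  assumes code_basis: "code_basis L mult e a n"
begin

abbreviation A :: "nat set \<Rightarrow> 'a" where "A \<sigma> \<equiv> a_sub mult e a \<sigma>"

lemma basis_in [simp]: "i \<in> {1..n} \<Longrightarrow> a i \<in> L"
  using code_basis unfolding code_basis_def by blast

lemma A_empty [simp]: "A {} = e"
  unfolding a_sub_def by simp

lemma A_singleton [simp]: "i \<in> {1..n} \<Longrightarrow> A {i} = a i"
  unfolding a_sub_def by simp

lemma A_insert_Max:
  assumes "finite \<sigma>" "\<forall>j\<in>\<sigma>. j < k"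
  shows "A (insert k \<sigma>) = mult (A \<sigma>) (a k)"
proof -
  have "k \<notin> \<sigma>" using assms(2) by blast
  then have "sorted_list_of_set (insert k \<sigma>) = sorted_list_of_set \<sigma> @ [k]"
    using assms by (simp add: sorted_list_of_set_insert sorted_insort_is_snoc less_imp_le)
  then show ?thesis unfolding a_sub_def by simp
qed

lemma A_in [simp]:
  assumes "\<sigma> \<subseteq> {1..n}"
  shows "A \<sigma> \<in> L"
proof -
  have "finite \<sigma>"
    using assms finite_subset by blast
  then show ?thesis
    using assms by (induction \<sigma> rule: finite_linorder_max_induct) (simp_all add: A_insert_Max)
qed

lemma A_insert:
  assumes "\<sigma> \<subseteq> {1..n}" "i \<in> {1..n}" "i \<notin> \<sigma>"
  shows "A (insert i \<sigma>) \<approx> mult (A \<sigma>) (a i)"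
proof -
  have "finite \<sigma>"
    using assms(1) finite_subset by blast
  then show ?thesis
    using assms
  proof (induction \<sigma> rule: finite_linorder_max_induct)
    case empty
    then show ?case by (simp add: sign_equiv_refl)
  next
    case (insert k \<sigma>)
    have k: "k \<in> {1..n}" and \<sigma>: "\<sigma> \<subseteq> {1..n}" and "i \<noteq> k" "i \<notin> \<sigma>"
      using insert.prems by auto
    show ?case
    proof (cases "k < i")
      case True
      with insert.hyps have "A (insert i (insert k \<sigma>)) = mult (A (insert k \<sigma>)) (a i)"
        by (intro A_insert_Max) auto
      with insert.prems show ?thesis by (simp add: sign_equiv_refl)
    next
      case False
      with \<open>i \<noteq> k\<close> insert.hyps have "\<forall>j\<in>insert i \<sigma>. j < k"
        by auto
      then have "A (insert i (insert k \<sigma>)) = mult (A (insert i \<sigma>)) (a k)"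
        using A_insert_Max[of "insert i \<sigma>" k] insert.hyps(1) by (simp add: insert_commute)
      also have "\<dots> \<approx> mult (mult (A \<sigma>) (a i)) (a k)"
        using insert.IH[OF \<sigma> insert.prems(2) \<open>i \<notin> \<sigma>\<close>] k by (simp add: sign_equiv_mult_left)
      also have "\<dots> \<approx> mult (A \<sigma>) (mult (a i) (a k))"
        using \<sigma> k insert.prems(2) by (simp add: sign_equiv_assoc)
      also have "\<dots> \<approx> mult (A \<sigma>) (mult (a k) (a i))"
        using \<sigma> k insert.prems(2) by (simp add: sign_equiv_mult_right sign_equiv_commute)
      also have "\<dots> \<approx> mult (mult (A \<sigma>) (a k)) (a i)"
        using \<sigma> k insert.prems(2) by (simp add: sign_equiv_assoc sign_equiv_sym)
      also have "mult (A \<sigma>) (a k) = A (insert k \<sigma>)"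
        using A_insert_Max[OF insert.hyps(1,2)] by simp
      finally show ?thesis .
    qed
  qed
qed

lemma A_mult_basis:
  assumes "\<tau> \<subseteq> {1..n}" "k \<in> {1..n}"
  shows "mult (A \<tau>) (a k) \<approx> A (symdiff \<tau> {k})"
proof (cases "k \<in> \<tau>")
  case True
  define \<rho> where "\<rho> = \<tau> - {k}"
  have \<rho>: "\<rho> \<subseteq> {1..n}" "k \<notin> \<rho>" "\<tau> = insert k \<rho>" "symdiff \<tau> {k} = \<rho>"
    using assms True unfolding \<rho>_def symdiff_def by auto
  have "mult (A \<tau>) (a k) \<approx> mult (mult (A \<rho>) (a k)) (a k)"
    using sign_equiv_mult_left[OF A_insert[OF \<rho>(1) assms(2) \<rho>(2)]] \<rho>(3) assms(2) by simp
  also have "\<dots> \<approx> mult (A \<rho>) (mult (a k) (a k))"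
    using \<rho>(1) assms(2) by (simp add: sign_equiv_assoc)
  also have "\<dots> \<approx> mult (A \<rho>) e"
    using sign_equiv_mult_right[OF sign_equiv_square[of "a k"]] \<rho>(1) assms(2) by simp
  also have "mult (A \<rho>) e = A (symdiff \<tau> {k})"
    using \<rho>(1,4) by simp
  finally show ?thesis .
next
  case False
  then have "symdiff \<tau> {k} = insert k \<tau>"
    unfolding symdiff_def by auto
  then show ?thesis
    using A_insert[OF assms False] by (simp add: sign_equiv_sym)
qed

lemma A_mult:
  assumes "\<sigma> \<subseteq> {1..n}" "\<mu> \<subseteq> {1..n}"
  shows "mult (A \<sigma>) (A \<mu>) \<approx> A (symdiff \<sigma> \<mu>)"
proof -
  have "finite \<mu>"
    using assms(2) finite_subset by blast
  then show ?thesis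
    using assms
  proof (induction \<mu> arbitrary: \<sigma> rule: finite_induct)
    case empty
    then show ?case by (simp add: symdiff_def sign_equiv_refl)
  next
    case (insert k \<mu>)
    have k: "k \<in> {1..n}" and \<mu>: "\<mu> \<subseteq> {1..n}"
      using insert.prems by auto
    have "mult (A \<sigma>) (A (insert k \<mu>)) \<approx> mult (A \<sigma>) (mult (A \<mu>) (a k))"
      using A_insert[OF \<mu> k insert.hyps(2)] insert.prems(1) by (simp add: sign_equiv_mult_right)
    also have "\<dots> \<approx> mult (mult (A \<sigma>) (A \<mu>)) (a k)"
      using insert.prems(1) \<mu> k by (simp add: sign_equiv_assoc sign_equiv_sym)
    also have "\<dots> \<approx> mult (A (symdiff \<sigma> \<mu>)) (a k)"
      using insert.IH[OF insert.prems(1) \<mu>] k by (simp add: sign_equiv_mult_left)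
    also have "\<dots> \<approx> A (symdiff (symdiff \<sigma> \<mu>) {k})"
      using A_mult_basis[OF symdiff_subset[OF insert.prems(1) \<mu>] k] .
    also have "symdiff (symdiff \<sigma> \<mu>) {k} = symdiff \<sigma> (insert k \<mu>)"
      using insert.hyps(2) unfolding symdiff_def by blast
    finally show ?case .
  qed
qed

lemma signed_A_bij: "bij_betw (\<lambda>(b, \<sigma>). signed b (A \<sigma>)) (UNIV \<times> Pow {1..n}) L"
proof -
  have "(\<lambda>(b, \<sigma>). if b then A \<sigma> else lneg L mult e (A \<sigma>)) = (\<lambda>(b, \<sigma>). signed b (A \<sigma>))"
    by (auto simp: fun_eq_iff lneg_eq_signed)
  then show ?thesis
    using code_basis unfolding code_basis_def by simp
qed

lemma signed_A_inject:
  assumes "\<sigma> \<subseteq> {1..n}" "\<tau> \<subseteq> {1..n}" "signed b (A \<sigma>) = signed c (A \<tau>)"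
  shows "\<sigma> = \<tau>"
  using bij_betw_imp_inj_on[OF signed_A_bij] assms unfolding inj_on_def by auto

definition supp :: "'a \<Rightarrow> nat set" where
  "supp x = (THE \<sigma>. \<sigma> \<subseteq> {1..n} \<and> (\<exists>b. x = signed b (A \<sigma>)))"

lemma supp_signed_A [simp]:
  assumes "\<sigma> \<subseteq> {1..n}"
  shows "supp (signed b (A \<sigma>)) = \<sigma>"
  unfolding supp_def
proof (rule the_equality)
  show "\<sigma> \<subseteq> {1..n} \<and> (\<exists>c. signed b (A \<sigma>) = signed c (A \<sigma>))"
    using assms by blast
next
  fix \<tau> assume "\<tau> \<subseteq> {1..n} \<and> (\<exists>c. signed b (A \<sigma>) = signed c (A \<tau>))"
  then show "\<tau> = \<sigma>"
    using signed_A_inject[OF assms] by blast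
qed

lemma supp_A [simp]: "\<sigma> \<subseteq> {1..n} \<Longrightarrow> supp (A \<sigma>) = \<sigma>"
  using supp_signed_A[of \<sigma> True] by simp

lemma signed_A_cases:
  assumes "x \<in> L"
  obtains b \<sigma> where "\<sigma> \<subseteq> {1..n}" "x = signed b (A \<sigma>)"
proof -
  have "x \<in> (\<lambda>(b, \<sigma>). signed b (A \<sigma>)) ` (UNIV \<times> Pow {1..n})"
    using assms bij_betw_imp_surj_on[OF signed_A_bij] by simp
  then show ?thesis
    using that by (auto elim!: imageE)
qed

lemma supp_subset: "x \<in> L \<Longrightarrow> supp x \<subseteq> {1..n}"
  by (elim signed_A_cases) simp

lemma sign_equiv_A_supp: "x \<in> L \<Longrightarrow> x \<approx> A (supp x)"
  by (elim signed_A_cases) (simp add: sign_equiv_signed)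

lemma supp_sign_equiv:
  assumes "x \<approx> y"
  shows "supp x = supp y"
proof -
  obtain b where y: "y \<in> L" and x: "x = signed b y"
    using assms unfolding sign_equiv_def by blast
  from y obtain c \<sigma> where "\<sigma> \<subseteq> {1..n}" "y = signed c (A \<sigma>)"
    by (rule signed_A_cases)
  with x show ?thesis by simp
qed

lemma supp_signed: "x \<in> L \<Longrightarrow> supp (signed b x) = supp x"
  by (simp add: supp_sign_equiv sign_equiv_signed)

lemma supp_mult:
  assumes "x \<in> L" "y \<in> L"
  shows "supp (mult x y) = symdiff (supp x) (supp y)"
proof -
  have "mult x y \<approx> mult (A (supp x)) (A (supp y))"
    using sign_equiv_mult[OF sign_equiv_A_supp[OF assms(1)] sign_equiv_A_supp[OF assms(2)]] .
  also have "\<dots> \<approx> A (symdiff (supp x) (supp y))"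
    using A_mult[OF supp_subset[OF assms(1)] supp_subset[OF assms(2)]] .
  finally have "supp (mult x y) = supp (A (symdiff (supp x) (supp y)))"
    by (rule supp_sign_equiv)
  then show ?thesis
    using symdiff_subset[OF supp_subset[OF assms(1)] supp_subset[OF assms(2)]] by simp
qed

lemma supp_commute_iff:
  assumes "x \<in> L" "y \<in> L"
  shows "mult x y = mult y x \<longleftrightarrow>
    mult (A (supp x)) (A (supp y)) = mult (A (supp y)) (A (supp x))"
proof -
  obtain b \<sigma> where \<sigma>: "\<sigma> \<subseteq> {1..n}" and x: "x = signed b (A \<sigma>)"
    using assms(1) by (rule signed_A_cases)
  obtain c \<mu> where \<mu>: "\<mu> \<subseteq> {1..n}" and y: "y = signed c (A \<mu>)"
    using assms(2) by (rule signed_A_cases)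
  show ?thesis
    using signed_commute_iff[of "A \<sigma>" "A \<mu>" b c] \<sigma> \<mu> unfolding x y by simp
qed

definition sign_pattern :: "(nat set \<Rightarrow> int) \<Rightarrow> 'a \<Rightarrow> 'a" where
  "sign_pattern \<Psi> x = signed (\<Psi> (supp x) = 1) x"

lemma sign_pattern_in [simp]: "x \<in> L \<Longrightarrow> sign_pattern \<Psi> x \<in> L"
  unfolding sign_pattern_def by simp

lemma sign_pattern_involution: "x \<in> L \<Longrightarrow> sign_pattern \<Psi> (sign_pattern \<Psi> x) = x"
  unfolding sign_pattern_def by (simp add: supp_signed)

lemma sign_pattern_half_hom_iff:
  assumes "x \<in> L" "y \<in> L" and signs: "\<And>\<sigma>. \<sigma> \<subseteq> {1..n} \<Longrightarrow> \<Psi> \<sigma> \<in> {1, -1}"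
  shows "(sign_pattern \<Psi> (mult x y) = mult (sign_pattern \<Psi> x) (sign_pattern \<Psi> y) \<or>
          sign_pattern \<Psi> (mult x y) = mult (sign_pattern \<Psi> y) (sign_pattern \<Psi> x)) \<longleftrightarrow>
    (mult (A (supp x)) (A (supp y)) = mult (A (supp y)) (A (supp x)) \<longrightarrow>
      \<Psi> (symdiff (supp x) (supp y)) = \<Psi> (supp x) * \<Psi> (supp y))"
proof -
  have \<sigma>: "supp x \<subseteq> {1..n}" and \<mu>: "supp y \<subseteq> {1..n}"
    using supp_subset assms(1,2) by auto
  have "\<Psi> (symdiff (supp x) (supp y)) = \<Psi> (supp x) * \<Psi> (supp y) \<longleftrightarrow>
      (\<Psi> (symdiff (supp x) (supp y)) = 1) = ((\<Psi> (supp x) = 1) = (\<Psi> (supp y) = 1))"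
    by (rule sign_eq_mult_iff[OF signs[OF symdiff_subset[OF \<sigma> \<mu>]] signs[OF \<sigma>] signs[OF \<mu>]])
  then show ?thesis
    unfolding sign_pattern_def supp_mult[OF assms(1,2)] signed_half_hom_iff[OF assms(1,2)]
      supp_commute_iff[OF assms(1,2)] by simp
qed

lemma Psi_hat_eq:
  assumes "x \<in> L"
  shows "Psi_hat L mult e a n \<Psi> x = sign_pattern \<Psi> x"
proof -
  obtain b \<sigma> where \<sigma>: "\<sigma> \<subseteq> {1..n}" and x: "x = signed b (A \<sigma>)"
    using assms by (rule signed_A_cases)
  have "\<And>\<tau>. (x = A \<tau> \<or> x = signed False (A \<tau>)) \<longleftrightarrow> (\<exists>c. x = signed c (A \<tau>))"
    unfolding ex_bool_eq by simp
  then have "(THE \<tau>. \<tau> \<subseteq> {1..n} \<and> (x = A \<tau> \<or> x = signed False (A \<tau>))) = supp x"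
    unfolding supp_def by presburger
  also have "supp x = \<sigma>"
    using \<sigma> x by simp
  finally have supp_eq: "(THE \<tau>. \<tau> \<subseteq> {1..n} \<and> (x = A \<tau> \<or> x = signed False (A \<tau>))) = \<sigma>" .
  have "Psi_hat L mult e a n \<Psi> x =
      (if x = A \<sigma> then signed (\<Psi> \<sigma> = 1) (A \<sigma>) else signed False (signed (\<Psi> \<sigma> = 1) (A \<sigma>)))"
    unfolding Psi_hat_def Let_def lneg_eq_signed supp_eq sgn_mult_eq_signed ..
  then show ?thesis
    using \<sigma> x signed_False_neq[of "A \<sigma>"] signed_commute[of "A \<sigma>" False]
    by (cases b) (simp_all add: sign_pattern_def)
qed

lemma Psi_hat_in_H_B:
  assumes "\<Psi> \<in> R_B L mult e a n"
  shows "Psi_hat L mult e a n \<Psi> \<in> H_B L mult a n"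
proof -
  let ?h = "Psi_hat L mult e a n \<Psi>"
  have signs: "\<And>\<sigma>. \<sigma> \<subseteq> {1..n} \<Longrightarrow> \<Psi> \<sigma> \<in> {1, -1}"
    and singleton: "\<And>j. j \<in> {1..n} \<Longrightarrow> \<Psi> {j} = 1"
    and multiplicative: "\<And>\<sigma> \<mu>. \<sigma> \<subseteq> {1..n} \<Longrightarrow> \<mu> \<subseteq> {1..n} \<Longrightarrow>
      mult (A \<sigma>) (A \<mu>) = mult (A \<mu>) (A \<sigma>) \<longrightarrow> \<Psi> (symdiff \<sigma> \<mu>) = \<Psi> \<sigma> * \<Psi> \<mu>"
    using assms unfolding R_B_def by auto
  have "bij_betw ?h L L"
    by (rule bij_betw_byWitness[where f' = ?h]) (auto simp: Psi_hat_eq sign_pattern_involution)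
  moreover have "?h (mult x y) = mult (?h x) (?h y) \<or> ?h (mult x y) = mult (?h y) (?h x)"
    if "x \<in> L" "y \<in> L" for x y
  proof -
    have "sign_pattern \<Psi> (mult x y) = mult (sign_pattern \<Psi> x) (sign_pattern \<Psi> y) \<or>
        sign_pattern \<Psi> (mult x y) = mult (sign_pattern \<Psi> y) (sign_pattern \<Psi> x)"
      using multiplicative[OF supp_subset[OF that(1)] supp_subset[OF that(2)]]
      by (simp only: sign_pattern_half_hom_iff[OF that signs])
    with that show ?thesis
      by (simp add: Psi_hat_eq)
  qed
  moreover have "?h (a i) = a i" if "i \<in> {1..n}" for i
    using supp_A[of "{i}"] singleton that by (simp add: Psi_hat_eq sign_pattern_def)
  ultimately show ?thesis
    unfolding H_B_def half_automorphism_def by blast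
qed

lemma H_B_sign_equiv:
  assumes "\<phi> \<in> H_B L mult a n" "x \<in> L"
  shows "\<phi> x \<approx> x"
proof -
  have ha: "half_automorphism L mult \<phi>" and fixes_basis: "\<And>i. i \<in> {1..n} \<Longrightarrow> \<phi> (a i) = a i"
    using assms(1) unfolding H_B_def by auto
  have A_case: "\<phi> (A \<sigma>) \<approx> A \<sigma>" if "\<sigma> \<subseteq> {1..n}" for \<sigma>
  proof -
    have "finite \<sigma>"
      using that finite_subset by blast
    then show ?thesis
      using that
    proof (induction \<sigma> rule: finite_induct)
      case empty
      then show ?case
        using half_automorphism_unit[OF ha] by (simp add: sign_equiv_refl)
    next
      case (insert i \<sigma>)
      have i: "i \<in> {1..n}" and \<sigma>: "\<sigma> \<subseteq> {1..n}"
        using insert.prems by auto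
      have "\<phi> (A (insert i \<sigma>)) \<approx> \<phi> (mult (A \<sigma>) (a i))"
        using half_automorphism_sign_equiv[OF ha A_insert[OF \<sigma> i insert.hyps(2)]] .
      also have "\<dots> \<approx> mult (\<phi> (A \<sigma>)) (\<phi> (a i))"
        using half_automorphism_mult[OF ha] \<sigma> i by simp
      also have "\<phi> (a i) = a i"
        using fixes_basis[OF i] .
      also have "mult (\<phi> (A \<sigma>)) (a i) \<approx> mult (A \<sigma>) (a i)"
        using sign_equiv_mult_left[OF insert.IH[OF \<sigma>]] i by simp
      also have "\<dots> \<approx> A (insert i \<sigma>)"
        using sign_equiv_sym[OF A_insert[OF \<sigma> i insert.hyps(2)]] .
      finally show ?case .
    qed
  qed
  have "\<phi> x \<approx> \<phi> (A (supp x))"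
    using half_automorphism_sign_equiv[OF ha sign_equiv_A_supp[OF assms(2)]] .
  also have "\<dots> \<approx> A (supp x)"
    using A_case[OF supp_subset[OF assms(2)]] .
  also have "\<dots> \<approx> x"
    using sign_equiv_sym[OF sign_equiv_A_supp[OF assms(2)]] .
  finally show ?thesis .
qed

lemma H_B_eq_sign_pattern:
  assumes "\<phi> \<in> H_B L mult a n" "x \<in> L"
  shows "\<phi> x = sign_pattern (\<lambda>\<sigma>. if \<phi> (A \<sigma>) = A \<sigma> then 1 else -1) x"
proof -
  obtain b \<sigma> where \<sigma>: "\<sigma> \<subseteq> {1..n}" and x: "x = signed b (A \<sigma>)"
    using assms(2) by (rule signed_A_cases)
  have "\<phi> (A \<sigma>) = signed (\<phi> (A \<sigma>) = A \<sigma>) (A \<sigma>)"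
    using sign_equiv_eq_signed[OF H_B_sign_equiv[OF assms(1) A_in[OF \<sigma>]]] .
  moreover have "\<phi> x = signed b (\<phi> (A \<sigma>))"
    using half_automorphism_signed assms(1) \<sigma> x unfolding H_B_def by simp
  ultimately show ?thesis
    using \<sigma> x signed_commute[of "A \<sigma>" b] unfolding sign_pattern_def
    by (cases "\<phi> (A \<sigma>) = A \<sigma>") simp_all
qed

lemma H_B_eq_Psi_hat:
  assumes "\<phi> \<in> H_B L mult a n"
  shows "\<exists>\<Psi>\<in>R_B L mult e a n. \<forall>x\<in>L. \<phi> x = Psi_hat L mult e a n \<Psi> x"
proof
  define \<Psi> :: "nat set \<Rightarrow> int" where "\<Psi> \<sigma> = (if \<phi> (A \<sigma>) = A \<sigma> then 1 else -1)" for \<sigma>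
  have ha: "half_automorphism L mult \<phi>" and fixes_basis: "\<And>i. i \<in> {1..n} \<Longrightarrow> \<phi> (a i) = a i"
    using assms unfolding H_B_def by auto
  have \<phi>_eq: "\<phi> x = sign_pattern \<Psi> x" if "x \<in> L" for x
    using H_B_eq_sign_pattern[OF assms that] unfolding \<Psi>_def .
  then show "\<forall>x\<in>L. \<phi> x = Psi_hat L mult e a n \<Psi> x"
    by (simp add: Psi_hat_eq)
  have signs: "\<Psi> \<sigma> \<in> {1, -1}" for \<sigma>
    by (simp add: \<Psi>_def)
  have "\<Psi> (symdiff \<sigma> \<mu>) = \<Psi> \<sigma> * \<Psi> \<mu>"
    if \<sigma>: "\<sigma> \<subseteq> {1..n}" and \<mu>: "\<mu> \<subseteq> {1..n}"
      and commute: "mult (A \<sigma>) (A \<mu>) = mult (A \<mu>) (A \<sigma>)" for \<sigma> \<mu>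
  proof -
    have "sign_pattern \<Psi> (mult (A \<sigma>) (A \<mu>)) =
          mult (sign_pattern \<Psi> (A \<sigma>)) (sign_pattern \<Psi> (A \<mu>)) \<or>
        sign_pattern \<Psi> (mult (A \<sigma>) (A \<mu>)) =
          mult (sign_pattern \<Psi> (A \<mu>)) (sign_pattern \<Psi> (A \<sigma>))"
      using half_automorphismD(3)[OF ha A_in[OF \<sigma>] A_in[OF \<mu>]] \<phi>_eq \<sigma> \<mu> by simp
    then have "mult (A (supp (A \<sigma>))) (A (supp (A \<mu>))) = mult (A (supp (A \<mu>))) (A (supp (A \<sigma>))) \<longrightarrow>
        \<Psi> (symdiff (supp (A \<sigma>)) (supp (A \<mu>))) = \<Psi> (supp (A \<sigma>)) * \<Psi> (supp (A \<mu>))"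
      by (simp only: sign_pattern_half_hom_iff[OF A_in[OF \<sigma>] A_in[OF \<mu>] signs])
    with commute \<sigma> \<mu> show ?thesis
      by simp
  qed
  moreover have "\<Psi> {} = 1"
    using half_automorphism_unit[OF ha] by (simp add: \<Psi>_def)
  moreover have "\<Psi> {j} = 1" if "j \<in> {1..n}" for j
    using fixes_basis that by (simp add: \<Psi>_def)
  ultimately show "\<Psi> \<in> R_B L mult e a n"
    unfolding R_B_def using signs by blast
qed

end

theorem proposition3p1:
  fixes L :: "'a set" and mult :: "'a \<Rightarrow> 'a \<Rightarrow> 'a" and e :: 'a
    and a :: "nat \<Rightarrow> 'a" and n :: nat
  assumes "code_loop L mult e"
    and "code_basis L mult e a n"
  shows "(\<forall>\<Psi>\<in>R_B L mult e a n. Psi_hat L mult e a n \<Psi> \<in> H_B L mult a n) \<and>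
         (\<forall>\<phi>\<in>H_B L mult a n. \<exists>\<Psi>\<in>R_B L mult e a n. \<forall>x\<in>L. \<phi> x = Psi_hat L mult e a n \<Psi> x)"
proof -
  interpret code_loop_with_basis L mult e a n
    using assms by unfold_locales
  show ?thesis
    using Psi_hat_in_H_B H_B_eq_Psi_hat by blast
qed

end
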